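(* Fix $N\in\mathbb{N}$, a constant $0<\alpha\le 1$, and for each $k\in\{0,\dots,N-1\}$ matrices $A_k\in\mathbb{R}^{n_x\times n_x}$, $B_k\in\mathbb{R}^{n_x\times n_u}$, $F_k\in\mathbb{R}^{n_x\times n_w}$, $E_k\in\mathbb{R}^{n_x\times n_p}$, $C_k\in\mathbb{R}^{n_q\times n_x}$, $D_k\in\mathbb{R}^{n_q\times n_u}$, $G_k\in\mathbb{R}^{n_q\times n_w}$ and a constant $\gamma_k>0$. Suppose there exist $Q_k\in\mathbb{S}^{n_x}_{++}$ for $k\in\{0,\dots,N\}$, and, for $k\in\{0,\dots,N-1\}$, matrices $Y_k\in\mathbb{R}^{n_u\times n_x}$ and scalars $\nu^p_k>0$, $\lambda^w_k>0$ such that for all $k\in\{0,\dots,N-1\}$ $$\begin{bmatrix} \alpha Q_k-\lambda^w_k Q_k & * & * & * & *\\ 0 & \nu^p_k I_{n_p} & * & * & *\\ 0 & 0 & \lambda^w_k I_{n_w} & * & *\\ A_kQ_k+B_kY_k & \nu^p_k E_k & F_k & Q_{k+1} & *\\ C_kQ_k+D_kY_k & 0 & G_k & 0 & \frac{\nu^p_k}{\gamma_k^2} I_{n_q} \end{bmatrix}\succeq 0 .$$ Let $K_k=Y_kQ_k^{-1}$, $A^{cl}_k=A_k+B_kK_k$, $C^{cl}_k=C_k+D_kK_k$. Then for every $k\in\{0,\dots,N-1\}$ and every $\eta\in\mathbb{R}^{n_x}$, $\delta p\in\mathbb{R}^{n_p}$, $w\in\mathbb{R}^{n_w}$ satisfying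 $$\|\delta p\|_2\le\gamma_k\|C^{cl}_k\eta+G_kw\|_2\quad\text{and}\quad \eta^\top Q_k^{-1}\eta\ \ge\ \|w\|_2^2,$$ the vector $\eta^+=A^{cl}_k\eta+F_kw+E_k\delta p$ satisfies $$(\eta^+)^\top Q_{k+1}^{-1}\eta^+\ \le\ \alpha\,\eta^\top Q_k^{-1}\eta .$$
   Context: Here $\mathbb{S}^n_{++}$ denotes the set of symmetric positive definite $n\times n$ matrices, and in a symmetric block matrix the symbol $*$ denotes the block determined by symmetry (i.e. the transpose of the corresponding lower-triangular block). $I_m$ is the $m\times m$ identity. The conclusion is the "Lyapunov condition" for the quadratic function $V(k,\eta)=\eta^\top Q_k^{-1}\eta$ along the discrete-time difference closed-loop system $\eta_{k+1}=A^{cl}_k\eta_k+F_kw_k+E_k\delta p_k$, $\delta q_k=C^{cl}_k\eta_k+G_kw_k$, in which the nonlinearity satisfies the Lipschitz-type bound $\|\delta p_k\|_2\le\gamma_k\|\delta q_k\|_2$. *)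

theory Defs
  imports "HOL-Analysis.Analysis"
begin

definition sym_pos_def :: "real^'n^'n \<Rightarrow> bool" where
  "sym_pos_def M \<longleftrightarrow> transpose M = M \<and> (\<forall>x. x \<noteq> 0 \<longrightarrow> 0 < x \<bullet> (M *v x))"

definition psd :: "real^'n^'n \<Rightarrow> bool" where
  "psd M \<longleftrightarrow> transpose M = M \<and> (\<forall>x. 0 \<le> x \<bullet> (M *v x))"

text \<open>Block index of the 5x5 block matrix whose row/column index type is
  'x + 'p + 'w + 'x + 'q (block sizes n_x, n_p, n_w, n_x, n_q).\<close>
definition blk :: "'x + ('p + ('w + ('x + 'q))) \<Rightarrow> nat" where
  "blk i = (case i of Inl _ \<Rightarrow> 1 | Inr (Inl _) \<Rightarrow> 2 | Inr (Inr (Inl _)) \<Rightarrow> 3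
          | Inr (Inr (Inr (Inl _))) \<Rightarrow> 4 | Inr (Inr (Inr (Inr _))) \<Rightarrow> 5)"

definition lower_entry ::
  "real^'x^'x \<Rightarrow> real^'p^'p \<Rightarrow> real^'w^'w \<Rightarrow>
   real^'x^'x \<Rightarrow> real^'p^'x \<Rightarrow> real^'w^'x \<Rightarrow> real^'x^'x \<Rightarrow>
   real^'x^'q \<Rightarrow> real^'p^'q \<Rightarrow> real^'w^'q \<Rightarrow> real^'x^'q \<Rightarrow> real^'q^'q \<Rightarrow>
   'x + ('p + ('w + ('x + 'q))) \<Rightarrow> 'x + ('p + ('w + ('x + 'q))) \<Rightarrow> real" where
  "lower_entry L11 L22 L33 L41 L42 L43 L44 L51 L52 L53 L54 L55 i j =
    (case i of
       Inl a \<Rightarrow> (case j of Inl b \<Rightarrow> L11 $ a $ b | _ \<Rightarrow> 0)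
     | Inr (Inl a) \<Rightarrow> (case j of Inr (Inl b) \<Rightarrow> L22 $ a $ b | _ \<Rightarrow> 0)
     | Inr (Inr (Inl a)) \<Rightarrow> (case j of Inr (Inr (Inl b)) \<Rightarrow> L33 $ a $ b | _ \<Rightarrow> 0)
     | Inr (Inr (Inr (Inl a))) \<Rightarrow>
         (case j of Inl b \<Rightarrow> L41 $ a $ b
                  | Inr (Inl b) \<Rightarrow> L42 $ a $ b
                  | Inr (Inr (Inl b)) \<Rightarrow> L43 $ a $ b
                  | Inr (Inr (Inr (Inl b))) \<Rightarrow> L44 $ a $ b
                  | Inr (Inr (Inr (Inr b))) \<Rightarrow> 0)
     | Inr (Inr (Inr (Inr a))) \<Rightarrow>
         (case j of Inl b \<Rightarrow> L51 $ a $ b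
                  | Inr (Inl b) \<Rightarrow> L52 $ a $ b
                  | Inr (Inr (Inl b)) \<Rightarrow> L53 $ a $ b
                  | Inr (Inr (Inr (Inl b))) \<Rightarrow> L54 $ a $ b
                  | Inr (Inr (Inr (Inr b))) \<Rightarrow> L55 $ a $ b))"

text \<open>The symmetric block matrix: lower triangle as given, the blocks marked
  * are the transposes of the corresponding lower blocks.\<close>
definition sym_block5 ::
  "real^'x^'x \<Rightarrow> real^'p^'p \<Rightarrow> real^'w^'w \<Rightarrow>
   real^'x^'x \<Rightarrow> real^'p^'x \<Rightarrow> real^'w^'x \<Rightarrow> real^'x^'x \<Rightarrow>
   real^'x^'q \<Rightarrow> real^'p^'q \<Rightarrow> real^'w^'q \<Rightarrow> real^'x^'q \<Rightarrow> real^'q^'q \<Rightarrow>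
   real^('x + ('p + ('w + ('x + 'q))))^('x + ('p + ('w + ('x + 'q))))" where
  "sym_block5 L11 L22 L33 L41 L42 L43 L44 L51 L52 L53 L54 L55 =
    (\<chi> i j. if blk j \<le> blk i
            then lower_entry L11 L22 L33 L41 L42 L43 L44 L51 L52 L53 L54 L55 i j
            else lower_entry L11 L22 L33 L41 L42 L43 L44 L51 L52 L53 L54 L55 j i)"

definition lmi_matrix ::
  "real \<Rightarrow> real \<Rightarrow> real \<Rightarrow> real \<Rightarrow> real^'x^'x \<Rightarrow> real^'x^'x \<Rightarrow>
   real^'x^'x \<Rightarrow> real^'u^'x \<Rightarrow> real^'x^'u \<Rightarrow> real^'p^'x \<Rightarrow> real^'w^'x \<Rightarrow>
   real^'x^'q \<Rightarrow> real^'u^'q \<Rightarrow> real^'w^'q \<Rightarrow>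
   real^('x + ('p + ('w + ('x + 'q))))^('x + ('p + ('w + ('x + 'q))))" where
  "lmi_matrix \<alpha> lw nu \<gamma> Qk Qk1 Ak Bk Yk Ek Fk Ck Dk Gk =
    sym_block5
      (\<alpha> *\<^sub>R Qk - lw *\<^sub>R Qk)
      (mat nu) (mat lw)
      (Ak ** Qk + Bk ** Yk) (nu *\<^sub>R Ek) Fk Qk1
      (Ck ** Qk + Dk ** Yk) 0 Gk 0 (mat (nu / \<gamma>\<^sup>2))"

end

theory Submission
  imports Defs
begin

text \<open>With \<open>V(\<eta>) = \<eta>\<^sup>T Q\<^sub>k\<^sup>-\<^sup>1 \<eta>\<close>, evaluate the quadratic form of the LMI at the
  block vector \<open>(Q\<^sub>k\<^sup>-\<^sup>1 \<eta>, \<delta>p/\<nu>, w, -Q\<^sub>k\<^sub>+\<^sub>1\<^sup>-\<^sup>1 \<eta>\<^sup>+, -(\<gamma>\<^sup>2/\<nu>) \<delta>q)\<close>, where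
  \<open>\<delta>q = C\<^sup>c\<^sup>l \<eta> + G w\<close>. Since \<open>(A Q + B Y) Q\<^sup>-\<^sup>1 = A\<^sup>c\<^sup>l\<close>, positive semidefiniteness
  becomes the dissipation inequality
  \<open>V(\<eta>\<^sup>+) + (\<gamma>\<^sup>2/\<nu>) \<parallel>\<delta>q\<parallel>\<^sup>2 \<le> (\<alpha> - \<lambda>) V(\<eta>) + \<parallel>\<delta>p\<parallel>\<^sup>2/\<nu> + \<lambda> \<parallel>w\<parallel>\<^sup>2\<close>.
  The sector bound \<open>\<parallel>\<delta>p\<parallel> \<le> \<gamma> \<parallel>\<delta>q\<parallel>\<close> and the bound \<open>\<parallel>w\<parallel>\<^sup>2 \<le> V(\<eta>)\<close> absorb the
  two multiplier terms (S-procedure), leaving \<open>V(\<eta>\<^sup>+) \<le> \<alpha> V(\<eta>)\<close>.\<close>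

lemma sym_pos_def_matrix_inv:
  fixes Q :: "real^'n^'n"
  assumes "sym_pos_def Q"
  shows "Q ** matrix_inv Q = mat 1" "matrix_inv Q ** Q = mat 1"
    and "transpose (matrix_inv Q) = matrix_inv Q"
proof -
  have "\<forall>x. Q *v x = 0 \<longrightarrow> x = 0"
    using assms unfolding sym_pos_def_def by (metis inner_zero_right less_irrefl)
  then have "invertible Q"
    using matrix_left_invertible_ker invertible_left_inverse by blast
  then have inv: "Q ** matrix_inv Q = mat 1 \<and> matrix_inv Q ** Q = mat 1"
    unfolding invertible_def matrix_inv_def by (rule someI_ex)
  then show "Q ** matrix_inv Q = mat 1" "matrix_inv Q ** Q = mat 1" by auto
  have "transpose (matrix_inv Q) ** Q = transpose (Q ** matrix_inv Q)"
    using assms by (simp add: sym_pos_def_def matrix_transpose_mul)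
  also have "\<dots> = mat 1" using inv by simp
  finally have "transpose (matrix_inv Q) ** Q = mat 1" .
  then have "transpose (matrix_inv Q) = transpose (matrix_inv Q) ** (Q ** matrix_inv Q)"
    using inv by (simp add: matrix_mul_assoc)
  then show "transpose (matrix_inv Q) = matrix_inv Q"
    using \<open>transpose (matrix_inv Q) ** Q = mat 1\<close> by (simp add: matrix_mul_assoc)
qed

lemma inner_transpose_matrix_vector:
  fixes A :: "real^'n^'m"
  shows "x \<bullet> (transpose A *v y) = y \<bullet> (A *v x)"
  by (metis dot_lmul_matrix inner_commute transpose_matrix_vector)

lemma matrix_vector_mult_mat: "mat (c::real) *v (x::real^'n) = c *\<^sub>R x"
  by (vector matrix_vector_mult_def mat_def)
     (simp add: if_distrib if_distribR cong del: if_weak_cong)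

lemma matrix_mult_add_rdistrib: "((A::real^'n^'m) + B) ** C = A ** C + B ** C"
  by (simp add: matrix_matrix_mult_def vec_eq_iff sum.distrib[symmetric] distrib_right)

lemma sum_UNIV_Plus:
  fixes f :: "('a::finite + 'b::finite) \<Rightarrow> 'c::comm_monoid_add"
  shows "sum f UNIV = sum (\<lambda>a. f (Inl a)) UNIV + sum (\<lambda>b. f (Inr b)) UNIV"
  by (subst UNIV_Plus_UNIV[symmetric], subst sum.Plus) (auto simp: comp_def)

definition block_vec5 :: "real^'x \<Rightarrow> real^'p \<Rightarrow> real^'w \<Rightarrow> real^'x \<Rightarrow> real^'q \<Rightarrow>
    real^('x + ('p + ('w + ('x + 'q))))" where
  "block_vec5 z1 z2 z3 z4 z5 = (\<chi> i. case i of Inl a \<Rightarrow> z1 $ a | Inr (Inl a) \<Rightarrow> z2 $ a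
     | Inr (Inr (Inl a)) \<Rightarrow> z3 $ a | Inr (Inr (Inr (Inl a))) \<Rightarrow> z4 $ a
     | Inr (Inr (Inr (Inr a))) \<Rightarrow> z5 $ a)"

lemma sym_block5_quadratic_form:
  fixes z1 :: "real^'x::finite" and z2 :: "real^'p::finite" and z3 :: "real^'w::finite"
    and z4 :: "real^'x" and z5 :: "real^'q::finite"
  defines "z \<equiv> block_vec5 z1 z2 z3 z4 z5"
  shows "z \<bullet> (sym_block5 L11 L22 L33 L41 L42 L43 L44 L51 L52 L53 L54 L55 *v z)
   = z1 \<bullet> (L11 *v z1) + z2 \<bullet> (L22 *v z2) + z3 \<bullet> (L33 *v z3) + z4 \<bullet> (L44 *v z4) + z5 \<bullet> (L55 *v z5)
     + 2 * (z4 \<bullet> (L41 *v z1)) + 2 * (z4 \<bullet> (L42 *v z2)) + 2 * (z4 \<bullet> (L43 *v z3))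
     + 2 * (z5 \<bullet> (L51 *v z1)) + 2 * (z5 \<bullet> (L52 *v z2)) + 2 * (z5 \<bullet> (L53 *v z3))
     + 2 * (z5 \<bullet> (L54 *v z4))"
  (is "z \<bullet> (?M *v z) = _")
proof -
  note block_simps = matrix_vector_mult_def sum_UNIV_Plus sym_block5_def blk_def
    lower_entry_def z_def block_vec5_def transpose_def
  have row1: "(?M *v z) $ Inl a = (L11 *v z1 + transpose L41 *v z4 + transpose L51 *v z5) $ a" for a
    by (simp add: block_simps)
  have row2: "(?M *v z) $ Inr (Inl a) = (L22 *v z2 + transpose L42 *v z4 + transpose L52 *v z5) $ a" for a
    by (simp add: block_simps)
  have row3: "(?M *v z) $ Inr (Inr (Inl a))
      = (L33 *v z3 + transpose L43 *v z4 + transpose L53 *v z5) $ a" for a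
    by (simp add: block_simps)
  have row4: "(?M *v z) $ Inr (Inr (Inr (Inl a)))
      = (L41 *v z1 + L42 *v z2 + L43 *v z3 + L44 *v z4 + transpose L54 *v z5) $ a" for a
    by (simp add: block_simps)
  have row5: "(?M *v z) $ Inr (Inr (Inr (Inr a)))
      = (L51 *v z1 + L52 *v z2 + L53 *v z3 + L54 *v z4 + L55 *v z5) $ a" for a
    by (simp add: block_simps)
  have "z \<bullet> (?M *v z) = z1 \<bullet> (L11 *v z1 + transpose L41 *v z4 + transpose L51 *v z5)
     + z2 \<bullet> (L22 *v z2 + transpose L42 *v z4 + transpose L52 *v z5)
     + z3 \<bullet> (L33 *v z3 + transpose L43 *v z4 + transpose L53 *v z5)
     + z4 \<bullet> (L41 *v z1 + L42 *v z2 + L43 *v z3 + L44 *v z4 + transpose L54 *v z5)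
     + z5 \<bullet> (L51 *v z1 + L52 *v z2 + L53 *v z3 + L54 *v z4 + L55 *v z5)"
    apply (subst inner_vec_def)
    apply (simp only: sum_UNIV_Plus row1 row2 row3 row4 row5)
    apply (simp add: inner_vec_def z_def block_vec5_def add.assoc)
    done
  then show ?thesis by (simp only: inner_add_right inner_transpose_matrix_vector)
qed

lemma lmi_matrix_quadratic_form:
  fixes z1 z4 :: "real^'x::finite" and z2 :: "real^'p::finite" and z3 :: "real^'w::finite"
    and z5 :: "real^'q::finite"
  defines "z \<equiv> block_vec5 z1 z2 z3 z4 z5"
  shows "z \<bullet> (lmi_matrix \<alpha> lw nu g Qk Qk1 Ak Bk Yk Ek Fk Ck Dk Gk *v z)
    = (\<alpha> - lw) * (z1 \<bullet> (Qk *v z1)) + nu * (norm z2)\<^sup>2 + lw * (norm z3)\<^sup>2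
      + z4 \<bullet> (Qk1 *v z4) + nu / g\<^sup>2 * (norm z5)\<^sup>2
      + 2 * (z4 \<bullet> ((Ak ** Qk + Bk ** Yk) *v z1 + nu *\<^sub>R (Ek *v z2) + Fk *v z3))
      + 2 * (z5 \<bullet> ((Ck ** Qk + Dk ** Yk) *v z1 + Gk *v z3))"
  unfolding z_def lmi_matrix_def sym_block5_quadratic_form
  by (simp add: matrix_vector_mult_mat matrix_vector_mult_diff_rdistrib
      scaleR_matrix_vector_assoc[symmetric] inner_add_right power2_norm_eq_inner algebra_simps)

lemma lmi_matrix_dissipation:
  fixes \<alpha> lw nu g :: real and Qk Qk1 Ak :: "real^'x::finite^'x"
    and Bk :: "real^'u::finite^'x" and Yk :: "real^'x^'u" and Ek :: "real^'p::finite^'x"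
    and Fk :: "real^'w::finite^'x" and Ck :: "real^'x^'q::finite" and Dk :: "real^'u^'q"
    and Gk :: "real^'w^'q" and \<eta> :: "real^'x" and dp :: "real^'p" and w :: "real^'w"
  defines "K \<equiv> Yk ** matrix_inv Qk"
  defines "\<eta>' \<equiv> (Ak + Bk ** K) *v \<eta> + Fk *v w + Ek *v dp"
    and "q \<equiv> (Ck + Dk ** K) *v \<eta> + Gk *v w"
  assumes Qk: "sym_pos_def Qk" and Qk1: "sym_pos_def Qk1"
    and g: "g \<noteq> 0" and nu: "0 < nu"
    and LMI: "psd (lmi_matrix \<alpha> lw nu g Qk Qk1 Ak Bk Yk Ek Fk Ck Dk Gk)"
  shows "\<eta>' \<bullet> (matrix_inv Qk1 *v \<eta>') + g\<^sup>2 / nu * (norm q)\<^sup>2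
    \<le> (\<alpha> - lw) * (\<eta> \<bullet> (matrix_inv Qk *v \<eta>)) + (norm dp)\<^sup>2 / nu + lw * (norm w)\<^sup>2"
proof -
  define P where "P = matrix_inv Qk"
  define P1 where "P1 = matrix_inv Qk1"
  define V where "V = \<eta> \<bullet> (P *v \<eta>)"
  define W where "W = \<eta>' \<bullet> (P1 *v \<eta>')"
  define z1 where "z1 = P *v \<eta>"
  define z2 where "z2 = (1 / nu) *\<^sub>R dp"
  define z4 where "z4 = - (P1 *v \<eta>')"
  define z5 where "z5 = (- (g\<^sup>2 / nu)) *\<^sub>R q"
  note invP = sym_pos_def_matrix_inv[OF Qk, folded P_def]
  note invP1 = sym_pos_def_matrix_inv[OF Qk1, folded P1_def]
  have "Qk *v z1 = \<eta>"
    unfolding z1_def by (simp add: matrix_vector_mul_assoc invP)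
  then have V: "z1 \<bullet> (Qk *v z1) = V"
    by (simp add: V_def z1_def inner_commute)
  have "Qk1 *v z4 = - \<eta>'"
    unfolding z4_def by (simp add: linear_neg[OF matrix_vector_mul_linear] matrix_vector_mul_assoc invP1)
  then have W: "z4 \<bullet> (Qk1 *v z4) = W"
    by (simp add: z4_def W_def inner_commute)
  have norm_z2: "nu * (norm z2)\<^sup>2 = (norm dp)\<^sup>2 / nu"
    using nu by (simp add: z2_def power2_eq_square)
  have norm_z5: "nu / g\<^sup>2 * (norm z5)\<^sup>2 = g\<^sup>2 / nu * (norm q)\<^sup>2"
    using nu g by (simp add: z5_def power2_eq_square field_simps)
  have closed_loop: "(Ak ** Qk + Bk ** Yk) *v z1 = (Ak + Bk ** K) *v \<eta>"
    "(Ck ** Qk + Dk ** Yk) *v z1 = (Ck + Dk ** K) *v \<eta>"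
    unfolding z1_def K_def P_def[symmetric] matrix_vector_mul_assoc
    by (simp_all add: matrix_mult_add_rdistrib matrix_mul_assoc[symmetric] invP)
  have "(Ak ** Qk + Bk ** Yk) *v z1 + nu *\<^sub>R (Ek *v z2) + Fk *v w = \<eta>'"
    using nu by (simp add: closed_loop z2_def \<eta>'_def matrix_vector_mult_scaleR)
  then have cross4: "z4 \<bullet> ((Ak ** Qk + Bk ** Yk) *v z1 + nu *\<^sub>R (Ek *v z2) + Fk *v w) = - W"
    by (simp add: z4_def W_def inner_commute)
  have cross5: "z5 \<bullet> ((Ck ** Qk + Dk ** Yk) *v z1 + Gk *v w) = - (g\<^sup>2 / nu * (norm q)\<^sup>2)"
    by (simp add: closed_loop q_def[symmetric] z5_def power2_norm_eq_inner)
  have "0 \<le> block_vec5 z1 z2 w z4 z5 \<bullet>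
      (lmi_matrix \<alpha> lw nu g Qk Qk1 Ak Bk Yk Ek Fk Ck Dk Gk *v block_vec5 z1 z2 w z4 z5)"
    using LMI unfolding psd_def by blast
  then have "W + g\<^sup>2 / nu * (norm q)\<^sup>2 \<le> (\<alpha> - lw) * V + (norm dp)\<^sup>2 / nu + lw * (norm w)\<^sup>2"
    unfolding lmi_matrix_quadratic_form V W norm_z2 norm_z5 cross4 cross5 by simp
  then show ?thesis unfolding W_def V_def P_def P1_def .
qed

lemma lmi_matrix_lyapunov_decrease:
  fixes \<alpha> lw nu g :: real and Qk Qk1 Ak :: "real^'x::finite^'x"
    and Bk :: "real^'u::finite^'x" and Yk :: "real^'x^'u" and Ek :: "real^'p::finite^'x"
    and Fk :: "real^'w::finite^'x" and Ck :: "real^'x^'q::finite" and Dk :: "real^'u^'q"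
    and Gk :: "real^'w^'q" and \<eta> :: "real^'x" and dp :: "real^'p" and w :: "real^'w"
  defines "K \<equiv> Yk ** matrix_inv Qk"
  defines "\<eta>' \<equiv> (Ak + Bk ** K) *v \<eta> + Fk *v w + Ek *v dp"
    and "q \<equiv> (Ck + Dk ** K) *v \<eta> + Gk *v w"
  assumes Qk: "sym_pos_def Qk" and Qk1: "sym_pos_def Qk1"
    and g: "g \<noteq> 0" and nu: "0 < nu" and lw: "0 \<le> lw"
    and LMI: "psd (lmi_matrix \<alpha> lw nu g Qk Qk1 Ak Bk Yk Ek Fk Ck Dk Gk)"
    and sector: "norm dp \<le> g * norm q"
    and disturbance: "(norm w)\<^sup>2 \<le> \<eta> \<bullet> (matrix_inv Qk *v \<eta>)"
  shows "\<eta>' \<bullet> (matrix_inv Qk1 *v \<eta>') \<le> \<alpha> * (\<eta> \<bullet> (matrix_inv Qk *v \<eta>))"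
proof -
  have dissipation: "\<eta>' \<bullet> (matrix_inv Qk1 *v \<eta>') + g\<^sup>2 / nu * (norm q)\<^sup>2
      \<le> (\<alpha> - lw) * (\<eta> \<bullet> (matrix_inv Qk *v \<eta>)) + (norm dp)\<^sup>2 / nu + lw * (norm w)\<^sup>2"
    unfolding \<eta>'_def q_def K_def by (rule lmi_matrix_dissipation[OF Qk Qk1 g nu LMI])
  have "(norm dp)\<^sup>2 \<le> g\<^sup>2 * (norm q)\<^sup>2"
    using power_mono[OF sector norm_ge_zero] by (simp add: power_mult_distrib)
  then have "(norm dp)\<^sup>2 / nu \<le> g\<^sup>2 / nu * (norm q)\<^sup>2"
    using nu by (simp add: divide_right_mono)
  moreover have "lw * (norm w)\<^sup>2 \<le> lw * (\<eta> \<bullet> (matrix_inv Qk *v \<eta>))"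
    using disturbance lw by (rule mult_left_mono)
  ultimately show ?thesis
    using dissipation by (simp add: algebra_simps)
qed

theorem theorem1:
  fixes N :: nat and \<alpha> :: real
    and A :: "nat \<Rightarrow> real^'x^'x" and B :: "nat \<Rightarrow> real^'u^'x"
    and F :: "nat \<Rightarrow> real^'w^'x" and E :: "nat \<Rightarrow> real^'p^'x"
    and C :: "nat \<Rightarrow> real^'x^'q" and D :: "nat \<Rightarrow> real^'u^'q"
    and G :: "nat \<Rightarrow> real^'w^'q" and \<gamma> :: "nat \<Rightarrow> real"
    and Q :: "nat \<Rightarrow> real^'x^'x" and Y :: "nat \<Rightarrow> real^'x^'u"
    and nup :: "nat \<Rightarrow> real" and lamw :: "nat \<Rightarrow> real"
  assumes alpha: "0 < \<alpha>" "\<alpha> \<le> 1"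
    and gamma: "\<And>k. k < N \<Longrightarrow> 0 < \<gamma> k"
    and Qpd: "\<And>k. k \<le> N \<Longrightarrow> sym_pos_def (Q k)"
    and nu: "\<And>k. k < N \<Longrightarrow> 0 < nup k"
    and lam: "\<And>k. k < N \<Longrightarrow> 0 < lamw k"
    and LMI: "\<And>k. k < N \<Longrightarrow>
      psd (lmi_matrix \<alpha> (lamw k) (nup k) (\<gamma> k) (Q k) (Q (Suc k))
             (A k) (B k) (Y k) (E k) (F k) (C k) (D k) (G k))"
  shows "\<forall>k < N. \<forall>(\<eta>::real^'x) (\<delta>p::real^'p) (w::real^'w).
      (let K = Y k ** matrix_inv (Q k);
           Acl = A k + B k ** K;
           Ccl = C k + D k ** K;
           \<eta>' = Acl *v \<eta> + F k *v w + E k *v \<delta>p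
       in norm \<delta>p \<le> \<gamma> k * norm (Ccl *v \<eta> + G k *v w)
          \<and> \<eta> \<bullet> (matrix_inv (Q k) *v \<eta>) \<ge> (norm w)\<^sup>2
          \<longrightarrow> \<eta>' \<bullet> (matrix_inv (Q (Suc k)) *v \<eta>') \<le> \<alpha> * (\<eta> \<bullet> (matrix_inv (Q k) *v \<eta>)))"
  unfolding Let_def
  by (metis lmi_matrix_lyapunov_decrease[OF Qpd Qpd gamma[THEN less_imp_neq, THEN not_sym]
        nu lam[THEN less_imp_le] LMI] less_imp_le Suc_leI)

end
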